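(* Let $G$ be a connected partial cube with $\Theta$-classes $E_1,\ldots,E_d$. For each $k$ let $U_k$ and $U_k'$ be the two connected components of $G-E_k$, and for $k,l\in\{1,\ldots,d\}$ set $m_{kl}^{11}=|E(U_k)\cap E(U_l)|$, $m_{kl}^{10}=|E(U_k)\cap E(U_l')|$, $m_{kl}^{01}=|E(U_k')\cap E(U_l)|$, $m_{kl}^{00}=|E(U_k')\cap E(U_l')|$. Then $$\sum_{e\in E(G)}\sum_{f\in E(G)}\widehat{d}(e,f)^2=2\widehat{W}_e(G)+4\sum_{k=1}^{d-1}\sum_{l=k+1}^{d}\big(m_{kl}^{11}m_{kl}^{00}+m_{kl}^{10}m_{kl}^{01}\big).$$
   Context: A partial cube is a graph isomorphic to an isometric subgraph of a hypercube. The Djoković–Winkler relation $\Theta$ on $E(G)$: $xy\,\Theta\,uv$ iff $d(x,u)+d(y,v)\neq d(x,v)+d(y,u)$, with $d$ the shortest-path distance. In a partial cube $\Theta$ is an equivalence relation whose classes are the $\Theta$-classes, and removing the edges of a $\Theta$-class leaves exactly two connected components. For edges $e=ab$, $f=xy$, $\widehat{d}(e,f)=\min\{d(a,x),d(a,y),d(b,x),d(b,y)\}$ (so $\widehat d(e,e)=0$), and $\widehat{W}_e(G)=\sum_{\{e,f\}\subseteq E(G)}\widehat{d}(e,f)$, the sum over unordered pairs of distinct edges. *)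

theory Defs
  imports Main
begin

definition graph :: "'a set \<Rightarrow> 'a set set \<Rightarrow> bool" where
  "graph V E \<longleftrightarrow> finite V \<and> (\<forall>e\<in>E. \<exists>u v. e = {u, v} \<and> u \<noteq> v \<and> u \<in> V \<and> v \<in> V)"

fun walk :: "'a set set \<Rightarrow> 'a list \<Rightarrow> bool" where
  "walk E [] = True"
| "walk E [x] = True"
| "walk E (x # y # xs) = ({x, y} \<in> E \<and> walk E (y # xs))"

definition reach :: "'a set \<Rightarrow> 'a set set \<Rightarrow> 'a \<Rightarrow> 'a \<Rightarrow> bool" where
  "reach V E u v \<longleftrightarrow> (\<exists>xs. xs \<noteq> [] \<and> set xs \<subseteq> V \<and> walk E xs \<and> hd xs = u \<and> last xs = v)"

definition dist :: "'a set \<Rightarrow> 'a set set \<Rightarrow> 'a \<Rightarrow> 'a \<Rightarrow> nat" where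
  "dist V E u v = (LEAST n. \<exists>xs. xs \<noteq> [] \<and> set xs \<subseteq> V \<and> walk E xs \<and> hd xs = u \<and> last xs = v
                          \<and> length xs = Suc n)"

definition connected_graph :: "'a set \<Rightarrow> 'a set set \<Rightarrow> bool" where
  "connected_graph V E \<longleftrightarrow> (\<forall>u\<in>V. \<forall>v\<in>V. reach V E u v)"

definition components :: "'a set \<Rightarrow> 'a set set \<Rightarrow> 'a set set" where
  "components V F = {{v \<in> V. reach V F u v} | u. u \<in> V}"

text \<open>Partial cube: isomorphic to an isometric subgraph of a hypercube Q_n
  (vertices of Q_n = subsets of {..<n}, adjacent iff symmetric difference has one element).\<close>
definition partial_cube :: "'a set \<Rightarrow> 'a set set \<Rightarrow> bool" where
  "partial_cube V E \<longleftrightarrow> graph V E \<and>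
     (\<exists>(n::nat) (f :: 'a \<Rightarrow> nat set).
        inj_on f V \<and> (\<forall>v\<in>V. f v \<subseteq> {..<n}) \<and>
        (\<forall>u\<in>V. \<forall>v\<in>V. {u, v} \<in> E \<longrightarrow> card ((f u - f v) \<union> (f v - f u)) = 1) \<and>
        (\<forall>u\<in>V. \<forall>v\<in>V. reach V E u v \<and> dist V E u v = card ((f u - f v) \<union> (f v - f u))))"

definition Theta :: "'a set \<Rightarrow> 'a set set \<Rightarrow> 'a set \<Rightarrow> 'a set \<Rightarrow> bool" where
  "Theta V E e f \<longleftrightarrow> (\<exists>x y u v. e = {x, y} \<and> f = {u, v} \<and>
      dist V E x u + dist V E y v \<noteq> dist V E x v + dist V E y u)"

definition theta_classes :: "'a set \<Rightarrow> 'a set set \<Rightarrow> 'a set set set" where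
  "theta_classes V E = {{f \<in> E. Theta V E e f} | e. e \<in> E}"

definition dhat :: "'a set \<Rightarrow> 'a set set \<Rightarrow> 'a set \<Rightarrow> 'a set \<Rightarrow> nat" where
  "dhat V E e f = Min {dist V E a x | a x. a \<in> e \<and> x \<in> f}"

definition Wehat :: "'a set \<Rightarrow> 'a set set \<Rightarrow> nat" where
  "Wehat V E = (\<Sum>P \<in> {P. P \<subseteq> E \<and> card P = 2}.
                 (THE r. \<exists>e f. P = {e, f} \<and> e \<noteq> f \<and> r = dhat V E e f))"

definition edges_in :: "'a set set \<Rightarrow> 'a set \<Rightarrow> 'a set set" where
  "edges_in E U = {e \<in> E. e \<subseteq> U}"

end

theory Submission
  imports Defs
begin

text \<open>
  Embed G isometrically into a hypercube via f. Every edge flips exactly one coordinate, and two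
  edges are Theta-related iff they flip the same coordinate, so the Theta-classes E_k correspond to
  coordinates i_k and the halves U_k, U'_k of G - E_k are the two sides i_k \<in> f v and i_k \<notin> f v.
  As the distance is the Hamming distance, dhat(e, g) is the number of coordinates on which all
  endpoints of e differ from all endpoints of g, i.e. the number of k such that e and g lie in
  opposite halves of E_k. Squaring this sum of indicators gives dhat(e, g) plus twice the sum over
  k < l of products of indicators. Summed over ordered pairs of edges, the first part is
  2 Wehat(G), and the (k, l) product counts the pairs of edges lying in opposite halves of both
  E_k and E_l, which is 2 (m11 m00 + m10 m01).
\<close>

lemma sum_upper_triangle_Suc:
  fixes g :: "nat \<Rightarrow> nat \<Rightarrow> 'b::comm_monoid_add"
  shows "(\<Sum>k=1..Suc d - 1. \<Sum>l=k+1..Suc d. g k l) =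
         (\<Sum>k=1..d-1. \<Sum>l=k+1..d. g k l) + (\<Sum>k=1..d. g k (Suc d))"
proof -
  have "(\<Sum>k=1..Suc d - 1. \<Sum>l=k+1..Suc d. g k l) = (\<Sum>k=1..d. (\<Sum>l=k+1..d. g k l) + g k (Suc d))"
    by (intro sum.cong) (auto simp: sum.cl_ivl_Suc)
  moreover have "(\<Sum>k=1..d. \<Sum>l=k+1..d. g k l) = (\<Sum>k=1..d-1. \<Sum>l=k+1..d. g k l)"
    by (cases d) (simp_all add: sum.cl_ivl_Suc)
  ultimately show ?thesis by (simp add: sum.distrib)
qed

lemma square_sum_atLeastAtMost:
  fixes x :: "nat \<Rightarrow> 'b::comm_semiring_1"
  shows "(\<Sum>k=1..d. x k)\<^sup>2 = (\<Sum>k=1..d. (x k)\<^sup>2) + 2 * (\<Sum>k=1..d-1. \<Sum>l=k+1..d. x k * x l)"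
proof (induction d)
  case (Suc d)
  have "(\<Sum>k=1..Suc d. x k)\<^sup>2 = (\<Sum>k=1..d. x k)\<^sup>2 + (x (Suc d))\<^sup>2 + 2 * (\<Sum>k=1..d. x k) * x (Suc d)"
    by (simp add: power2_sum)
  also have "\<dots> = (\<Sum>k=1..d. (x k)\<^sup>2) + (x (Suc d))\<^sup>2
      + 2 * ((\<Sum>k=1..d-1. \<Sum>l=k+1..d. x k * x l) + (\<Sum>k=1..d. x k * x (Suc d)))"
    unfolding Suc.IH sum_distrib_right[symmetric] by (simp add: algebra_simps)
  also have "\<dots> = (\<Sum>k=1..Suc d. (x k)\<^sup>2) + 2 * (\<Sum>k=1..Suc d-1. \<Sum>l=k+1..Suc d. x k * x l)"
    by (simp only: sum_upper_triangle_Suc[of "\<lambda>k l. x k * x l"]) simp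
  finally show ?case .
qed simp

lemma sum_sum_of_bool_mult:
  "finite A \<Longrightarrow> (\<Sum>a\<in>A. \<Sum>b\<in>A. of_bool (P a) * of_bool (Q b) :: nat) = card {a\<in>A. P a} * card {b\<in>A. Q b}"
  by (simp only: sum_product[symmetric]) (simp add: Int_def Collect_conj_eq[symmetric])

lemma sum_eq_iff_eq_at:
  fixes p q :: "'i \<Rightarrow> 'b::cancel_comm_monoid_add"
  assumes "finite A" "c \<in> A" "\<And>i. i \<in> A \<Longrightarrow> i \<noteq> c \<Longrightarrow> p i = q i"
  shows "sum p A = sum q A \<longleftrightarrow> p c = q c"
proof -
  have "sum p (A - {c}) = sum q (A - {c})" using assms(3) by (intro sum.cong) auto
  then show ?thesis using assms(1,2) by (simp add: sum.remove)
qed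

lemma two_block_partition:
  assumes "A \<inter> B = {}" "A \<noteq> {}" "B \<noteq> {}" "U \<union> U' = A \<union> B"
    and "U \<subseteq> A \<or> U \<subseteq> B" "U' \<subseteq> A \<or> U' \<subseteq> B"
  shows "(U = A \<and> U' = B) \<or> (U = B \<and> U' = A)"
proof -
  have "\<not> (U \<subseteq> A \<and> U' \<subseteq> A)" "\<not> (U \<subseteq> B \<and> U' \<subseteq> B)"
    using assms(1-4) by auto
  then show ?thesis using assms(1,4-6) by auto
qed

lemma walk_invariant:
  assumes "walk F xs" "xs \<noteq> []" "\<And>x y. {x, y} \<in> F \<Longrightarrow> P x = P y"
  shows "P (hd xs) = P (last xs)"
  using assms(1,2)
proof (induction xs rule: induct_list012)
  case (3 x y zs)
  then have "{x, y} \<in> F" "walk F (y # zs)" by simp_all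
  then have "P x = P y" "P y = P (last (y # zs))" using assms(3) "3.IH"(2) by auto
  then show ?case by simp
qed simp_all

lemma reach_invariant:
  assumes "reach V F u v" "\<And>x y. {x, y} \<in> F \<Longrightarrow> P x = P y"
  shows "P u = P v"
proof -
  obtain xs where "xs \<noteq> []" "walk F xs" "hd xs = u" "last xs = v"
    using assms(1) unfolding reach_def by blast
  then show ?thesis using walk_invariant[of F xs P] assms(2) by simp
qed

lemma reach_refl: "v \<in> V \<Longrightarrow> reach V F v v"
  unfolding reach_def by (intro exI[of _ "[v]"]) auto

lemma components_cover:
  assumes "v \<in> V"
  shows "\<exists>C\<in>components V F. v \<in> C"
proof
  show "{w\<in>V. reach V F v w} \<in> components V F" unfolding components_def using assms by blast
  show "v \<in> {w\<in>V. reach V F v w}" using assms reach_refl[of v V F] by simp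
qed

lemma components_subset: "C \<in> components V F \<Longrightarrow> C \<subseteq> V"
  unfolding components_def by blast

lemma components_nonempty:
  assumes "C \<in> components V F"
  shows "C \<noteq> {}"
proof -
  obtain u where "u \<in> V" "C = {w\<in>V. reach V F u w}" using assms unfolding components_def by blast
  then have "u \<in> C" using reach_refl[of u V F] by simp
  then show ?thesis by blast
qed

lemma component_invariant:
  assumes "C \<in> components V F" "a \<in> C" "b \<in> C" "\<And>x y. {x, y} \<in> F \<Longrightarrow> P x = P y"
  shows "P a = P b"
proof -
  obtain u where "C = {v\<in>V. reach V F u v}" using assms(1) unfolding components_def by blast
  then have "P u = P a" "P u = P b"
    using assms(2-4) reach_invariant[of V F u _ P] by auto
  then show ?thesis by simp
qed

lemma sum_symmetric_eq_twice_sum_doubletons: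
  fixes h :: "'b \<Rightarrow> 'b \<Rightarrow> nat"
  assumes "finite E" and sym: "\<And>e g. e \<in> E \<Longrightarrow> g \<in> E \<Longrightarrow> h e g = h g e"
    and diag: "\<And>e. e \<in> E \<Longrightarrow> h e e = 0"
  shows "(\<Sum>e\<in>E. \<Sum>g\<in>E. h e g) =
    2 * (\<Sum>P \<in> {P. P \<subseteq> E \<and> card P = 2}. (THE r. \<exists>e g. P = {e, g} \<and> e \<noteq> g \<and> r = h e g))"
proof -
  define Off where "Off = {p \<in> E \<times> E. fst p \<noteq> snd p}"
  define T where "T = {P. P \<subseteq> E \<and> card P = 2}"
  have "finite Off" unfolding Off_def using \<open>finite E\<close> by simp
  have "T \<subseteq> Pow E" unfolding T_def by blast
  then have "finite T" using \<open>finite E\<close> by (simp add: finite_subset)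
  have "(\<Sum>e\<in>E. \<Sum>g\<in>E. h e g) = (\<Sum>p\<in>E \<times> E. h (fst p) (snd p))"
    by (simp add: sum.cartesian_product split_beta)
  also have "\<dots> = (\<Sum>p\<in>Off. h (fst p) (snd p))"
    unfolding Off_def using \<open>finite E\<close> diag by (intro sum.mono_neutral_right) auto
  also have "\<dots> = (\<Sum>P\<in>T. \<Sum>p\<in>{p\<in>Off. {fst p, snd p} = P}. h (fst p) (snd p))"
    by (rule sum.group[symmetric, OF \<open>finite Off\<close> \<open>finite T\<close>])
      (auto simp: Off_def T_def card_2_iff)
  also have "\<dots> = (\<Sum>P\<in>T. 2 * (THE r. \<exists>e g. P = {e, g} \<and> e \<noteq> g \<and> r = h e g))"
  proof (rule sum.cong[OF refl])
    fix P assume "P \<in> T"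
    then obtain e g where eg: "P = {e, g}" "e \<noteq> g" "e \<in> E" "g \<in> E"
      unfolding T_def by (auto simp: card_2_iff)
    have "{p\<in>Off. {fst p, snd p} = P} = {(e, g), (g, e)}"
      unfolding Off_def using eg by (auto simp: doubleton_eq_iff)
    moreover have "(THE r. \<exists>e' g'. P = {e', g'} \<and> e' \<noteq> g' \<and> r = h e' g') = h e g"
      using eg sym by (intro the_equality) (auto simp: doubleton_eq_iff)
    ultimately show "(\<Sum>p\<in>{p\<in>Off. {fst p, snd p} = P}. h (fst p) (snd p)) =
        2 * (THE r. \<exists>e g. P = {e, g} \<and> e \<noteq> g \<and> r = h e g)"
      using eg sym by simp
  qed
  finally show ?thesis unfolding T_def by (simp add: sum_distrib_left)
qed

lemma sum_swap_nested:
  "(\<Sum>a\<in>A. \<Sum>b\<in>B. \<Sum>k\<in>K. \<Sum>l\<in>L k. F a b k l) = (\<Sum>k\<in>K. \<Sum>l\<in>L k. \<Sum>a\<in>A. \<Sum>b\<in>B. F a b k l)"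
proof -
  have "(\<Sum>a\<in>A. \<Sum>b\<in>B. \<Sum>k\<in>K. \<Sum>l\<in>L k. F a b k l) = (\<Sum>a\<in>A. \<Sum>k\<in>K. \<Sum>b\<in>B. \<Sum>l\<in>L k. F a b k l)"
    by (rule sum.cong[OF refl], rule sum.swap)
  also have "\<dots> = (\<Sum>a\<in>A. \<Sum>k\<in>K. \<Sum>l\<in>L k. \<Sum>b\<in>B. F a b k l)"
    by (rule sum.cong[OF refl], rule sum.cong[OF refl], rule sum.swap)
  also have "\<dots> = (\<Sum>k\<in>K. \<Sum>a\<in>A. \<Sum>l\<in>L k. \<Sum>b\<in>B. F a b k l)"
    by (rule sum.swap)
  also have "\<dots> = (\<Sum>k\<in>K. \<Sum>l\<in>L k. \<Sum>a\<in>A. \<Sum>b\<in>B. F a b k l)"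
    by (rule sum.cong[OF refl], rule sum.swap)
  finally show ?thesis .
qed

locale cube_embedding =
  fixes V :: "'a set" and E :: "'a set set" and n :: nat and f :: "'a \<Rightarrow> nat set"
  assumes graph: "graph V E"
    and into_cube: "\<And>v. v \<in> V \<Longrightarrow> f v \<subseteq> {..<n}"
    and edge_flips_one:
      "\<And>u v. u \<in> V \<Longrightarrow> v \<in> V \<Longrightarrow> {u, v} \<in> E \<Longrightarrow> card ((f u - f v) \<union> (f v - f u)) = 1"
    and isometric:
      "\<And>u v. u \<in> V \<Longrightarrow> v \<in> V \<Longrightarrow> reach V E u v \<and> dist V E u v = card ((f u - f v) \<union> (f v - f u))"
begin

lemma edge_doubleton: "e \<in> E \<Longrightarrow> \<exists>x y. e = {x, y} \<and> x \<noteq> y \<and> x \<in> V \<and> y \<in> V"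
  using graph unfolding graph_def by blast

lemma edge_subset: "e \<in> E \<Longrightarrow> e \<subseteq> V"
  using edge_doubleton by blast

lemma edge_nonempty: "e \<in> E \<Longrightarrow> e \<noteq> {}"
  using edge_doubleton by blast

lemma finite_V: "finite V"
  using graph unfolding graph_def by blast

lemma finite_E: "finite E"
proof (rule finite_subset)
  show "E \<subseteq> Pow V" using edge_subset by blast
qed (simp add: finite_V)

lemma dist_eq_hamming:
  assumes "u \<in> V" "v \<in> V"
  shows "dist V E u v = (\<Sum>i<n. of_bool ((i \<in> f u) \<noteq> (i \<in> f v)))"
proof -
  have "(f u - f v) \<union> (f v - f u) = {i\<in>{..<n}. (i \<in> f u) \<noteq> (i \<in> f v)}"
    using into_cube assms by auto
  then show ?thesis using isometric[OF assms] by (simp add: Int_def)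
qed

definition flip_coord :: "'a set \<Rightarrow> nat" where
  "flip_coord e = (THE i. \<exists>x\<in>e. \<exists>y\<in>e. (i \<in> f x) \<noteq> (i \<in> f y))"

lemma edge_flips_iff:
  assumes "e \<in> E" "e = {x, y}"
  shows "(i \<in> f x) \<noteq> (i \<in> f y) \<longleftrightarrow> i = flip_coord e"
    and "flip_coord e < n"
proof -
  have xy: "x \<noteq> y" "x \<in> V" "y \<in> V"
    using edge_doubleton[OF assms(1)] assms(2) by (auto simp: doubleton_eq_iff)
  have "card ((f x - f y) \<union> (f y - f x)) = 1" using edge_flips_one xy assms by auto
  then obtain c where c: "(f x - f y) \<union> (f y - f x) = {c}" by (rule card_1_singletonE)
  then have flips: "(j \<in> f x) \<noteq> (j \<in> f y) \<longleftrightarrow> j = c" for j by blast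
  then have "flip_coord e = c" unfolding flip_coord_def assms(2) by auto
  with flips show "(i \<in> f x) \<noteq> (i \<in> f y) \<longleftrightarrow> i = flip_coord e" by simp
  show "flip_coord e < n" using c into_cube xy \<open>flip_coord e = c\<close> by blast
qed

lemma flip_coord_less: "e \<in> E \<Longrightarrow> flip_coord e < n"
  using edge_doubleton edge_flips_iff(2) by blast

lemma edge_endpoints_agree:
  assumes "e \<in> E" "a \<in> e" "b \<in> e" "i \<noteq> flip_coord e"
  shows "(i \<in> f a) = (i \<in> f b)"
proof -
  obtain x y where "e = {x, y}" using edge_doubleton[OF assms(1)] by blast
  moreover have "(i \<in> f x) = (i \<in> f y)"
    using edge_flips_iff(1)[OF assms(1) \<open>e = {x, y}\<close>] assms(4) by blast
  ultimately show ?thesis using assms(2,3) by auto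
qed

lemma edge_endpoint_choice:
  assumes "e \<in> E"
  shows "\<exists>a\<in>e. (flip_coord e \<in> f a) = P"
proof -
  obtain x y where "e = {x, y}" using edge_doubleton[OF assms] by blast
  moreover have "(flip_coord e \<in> f x) \<noteq> (flip_coord e \<in> f y)"
    using edge_flips_iff(1)[OF assms \<open>e = {x, y}\<close>] by blast
  ultimately show ?thesis by auto
qed

lemma Theta_iff_flip_coord:
  assumes "e \<in> E" "g \<in> E"
  shows "Theta V E e g \<longleftrightarrow> flip_coord e = flip_coord g"
proof -
  have crossing: "dist V E x u + dist V E y v \<noteq> dist V E x v + dist V E y u \<longleftrightarrow> flip_coord e = flip_coord g"
    if xy: "e = {x, y}" and uv: "g = {u, v}" for x y u v
  proof -
    note flips_e = edge_flips_iff(1)[OF assms(1) xy] and flips_g = edge_flips_iff(1)[OF assms(2) uv]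
    define p where "p a b i = (of_bool ((i \<in> f x) \<noteq> (i \<in> f a)) + of_bool ((i \<in> f y) \<noteq> (i \<in> f b)) :: nat)"
      for a b i
    have "x \<in> V" "y \<in> V" "u \<in> V" "v \<in> V" using xy uv assms edge_subset by auto
    then have "dist V E x u + dist V E y v = (\<Sum>i<n. p u v i)"
      and "dist V E x v + dist V E y u = (\<Sum>i<n. p v u i)"
      by (simp_all add: dist_eq_hamming p_def sum.distrib)
    moreover have "p u v i = p v u i" if "i \<noteq> flip_coord e" for i
      using flips_e[of i] that unfolding p_def by auto
    moreover have "p u v (flip_coord e) = p v u (flip_coord e) \<longleftrightarrow> flip_coord e \<noteq> flip_coord g"
      using flips_e[of "flip_coord e"] flips_g[of "flip_coord e"] unfolding p_def by auto
    moreover have "flip_coord e \<in> {..<n}" using flip_coord_less assms(1) by simp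
    ultimately show ?thesis using sum_eq_iff_eq_at[of "{..<n}" "flip_coord e" "p u v" "p v u"] by auto
  qed
  obtain x y u v where xy: "e = {x, y}" and uv: "g = {u, v}" using edge_doubleton assms by meson
  show ?thesis
  proof
    assume "Theta V E e g"
    then obtain x' y' u' v' where "e = {x', y'}" "g = {u', v'}"
      and "dist V E x' u' + dist V E y' v' \<noteq> dist V E x' v' + dist V E y' u'"
      unfolding Theta_def by blast
    then show "flip_coord e = flip_coord g" using crossing by blast
  next
    assume "flip_coord e = flip_coord g"
    then show "Theta V E e g" unfolding Theta_def using crossing[OF xy uv] xy uv by blast
  qed
qed

definition separates :: "nat \<Rightarrow> 'a set \<Rightarrow> 'a set \<Rightarrow> bool" where
  "separates i e g \<longleftrightarrow> (\<forall>a\<in>e. \<forall>b\<in>g. (i \<in> f a) \<noteq> (i \<in> f b))"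

lemma separates_iff:
  assumes "e \<noteq> {}" "g \<noteq> {}"
  shows "separates i e g \<longleftrightarrow>
    (\<forall>a\<in>e. i \<in> f a) \<and> (\<forall>b\<in>g. i \<notin> f b) \<or> (\<forall>a\<in>e. i \<notin> f a) \<and> (\<forall>b\<in>g. i \<in> f b)"
proof -
  obtain a0 b0 where "a0 \<in> e" "b0 \<in> g" using assms by blast
  then show ?thesis unfolding separates_def by metis
qed

lemma closest_endpoints:
  assumes "e \<in> E" "g \<in> E"
  obtains a b where "a \<in> e" "b \<in> g" "\<And>i. (i \<in> f a) \<noteq> (i \<in> f b) \<longleftrightarrow> separates i e g"
proof -
  obtain u where "u \<in> g" using edge_nonempty assms(2) by blast
  obtain a where a: "a \<in> e" "(flip_coord e \<in> f a) = (flip_coord e \<in> f u)"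
    using edge_endpoint_choice[OF assms(1)] by blast
  obtain b where b: "b \<in> g" "(flip_coord g \<in> f b) = (flip_coord g \<in> f a)"
    using edge_endpoint_choice[OF assms(2)] by blast
  have agree_e: "(flip_coord e \<in> f a) = (flip_coord e \<in> f b)"
  proof (cases "flip_coord e = flip_coord g")
    case False
    then show ?thesis using a(2) edge_endpoints_agree[OF assms(2) \<open>u \<in> g\<close> b(1)] by simp
  qed (use b(2) in simp)
  have "(i \<in> f a) \<noteq> (i \<in> f b) \<longleftrightarrow> separates i e g" for i
  proof
    assume diff: "(i \<in> f a) \<noteq> (i \<in> f b)"
    then have "i \<noteq> flip_coord e" "i \<noteq> flip_coord g" using agree_e b(2) by auto
    then have "\<forall>a'\<in>e. (i \<in> f a') = (i \<in> f a)" "\<forall>b'\<in>g. (i \<in> f b') = (i \<in> f b)"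
      using edge_endpoints_agree[OF assms(1) _ a(1)] edge_endpoints_agree[OF assms(2) _ b(1)] by auto
    then show "separates i e g" using diff unfolding separates_def by simp
  next
    assume "separates i e g"
    then show "(i \<in> f a) \<noteq> (i \<in> f b)" using a(1) b(1) unfolding separates_def by blast
  qed
  with a(1) b(1) show thesis by (rule that)
qed

lemma dhat_eq_count_separating:
  assumes "e \<in> E" "g \<in> E"
  shows "dhat V E e g = (\<Sum>i<n. of_bool (separates i e g))"
proof -
  define S where "S = {dist V E a b | a b. a \<in> e \<and> b \<in> g}"
  have "finite e" "finite g" using assms edge_subset finite_V finite_subset by metis+
  moreover have "S = (\<lambda>(a, b). dist V E a b) ` (e \<times> g)" unfolding S_def by auto
  ultimately have "finite S" by simp
  have dist: "dist V E a b = (\<Sum>i<n. of_bool ((i \<in> f a) \<noteq> (i \<in> f b)))" if "a \<in> e" "b \<in> g" for a b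
  proof (rule dist_eq_hamming)
    show "a \<in> V" "b \<in> V" using that assms edge_subset by auto
  qed
  have lower: "(\<Sum>i<n. of_bool (separates i e g)) \<le> s" if "s \<in> S" for s
  proof -
    obtain a b where "a \<in> e" "b \<in> g" "s = dist V E a b" using \<open>s \<in> S\<close> unfolding S_def by blast
    then show ?thesis
      by (simp only: dist) (rule sum_mono, auto simp: separates_def)
  qed
  obtain a b where "a \<in> e" "b \<in> g" "\<And>i. (i \<in> f a) \<noteq> (i \<in> f b) \<longleftrightarrow> separates i e g"
    using closest_endpoints assms by blast
  then have "dist V E a b = (\<Sum>i<n. of_bool (separates i e g))"
    by (simp only: dist)
  then have "(\<Sum>i<n. of_bool (separates i e g)) \<in> S"
    unfolding S_def using \<open>a \<in> e\<close> \<open>b \<in> g\<close> by (intro CollectI exI[of _ a] exI[of _ b]) simp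
  with \<open>finite S\<close> lower show ?thesis unfolding dhat_def S_def[symmetric] by (intro Min_eqI) auto
qed

lemma unflipped_coord_constant:
  assumes "i \<notin> flip_coord ` E" "a \<in> V" "b \<in> V"
  shows "(i \<in> f a) = (i \<in> f b)"
proof (rule reach_invariant[where P = "\<lambda>x. i \<in> f x"])
  show "reach V E a b" using isometric assms(2,3) by blast
  show "(i \<in> f x) = (i \<in> f y)" if "{x, y} \<in> E" for x y
    using edge_flips_iff(1)[OF that refl, of i] assms(1) that by blast
qed

lemma theta_classes_eq: "theta_classes V E = (\<lambda>e. {g\<in>E. flip_coord g = flip_coord e}) ` E"
  unfolding theta_classes_def Setcompr_eq_image
  by (rule image_cong[OF refl]) (use Theta_iff_flip_coord in auto)

end

locale enumerated_theta_classes = cube_embedding V E n f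
  for V :: "'a set" and E :: "'a set set" and n :: nat and f :: "'a \<Rightarrow> nat set" +
  fixes d :: nat and Ecl :: "nat \<Rightarrow> 'a set set" and U U' :: "nat \<Rightarrow> 'a set"
  assumes enum: "bij_betw Ecl {1..d} (theta_classes V E)"
    and halves: "\<And>k. k \<in> {1..d} \<Longrightarrow> components V (E - Ecl k) = {U k, U' k}"
begin

definition class_coord :: "nat \<Rightarrow> nat" where
  "class_coord k = (SOME i. i \<in> flip_coord ` E \<and> Ecl k = {g\<in>E. flip_coord g = i})"

lemma class_coord:
  assumes "k \<in> {1..d}"
  shows "class_coord k \<in> flip_coord ` E" and "Ecl k = {g\<in>E. flip_coord g = class_coord k}"
proof -
  have "Ecl k \<in> theta_classes V E" using enum assms bij_betwE by blast
  then have "\<exists>i. i \<in> flip_coord ` E \<and> Ecl k = {g\<in>E. flip_coord g = i}"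
    unfolding theta_classes_eq by blast
  then have "class_coord k \<in> flip_coord ` E \<and> Ecl k = {g\<in>E. flip_coord g = class_coord k}"
    unfolding class_coord_def by (rule someI_ex)
  then show "class_coord k \<in> flip_coord ` E" "Ecl k = {g\<in>E. flip_coord g = class_coord k}"
    by auto
qed

lemma inj_on_class_coord: "inj_on class_coord {1..d}"
proof
  fix k l assume "k \<in> {1..d}" "l \<in> {1..d}" "class_coord k = class_coord l"
  then have "Ecl k = Ecl l" using class_coord(2) by simp
  with \<open>k \<in> {1..d}\<close> \<open>l \<in> {1..d}\<close> show "k = l"
    using inj_onD[OF bij_betw_imp_inj_on[OF enum]] by blast
qed

lemma class_coord_image: "class_coord ` {1..d} = flip_coord ` E"
proof
  show "class_coord ` {1..d} \<subseteq> flip_coord ` E" using class_coord(1) by blast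
  show "flip_coord ` E \<subseteq> class_coord ` {1..d}"
  proof
    fix i assume "i \<in> flip_coord ` E"
    then obtain e where e: "e \<in> E" "i = flip_coord e" by blast
    then have "{g\<in>E. flip_coord g = flip_coord e} \<in> Ecl ` {1..d}"
      using bij_betw_imp_surj_on[OF enum] unfolding theta_classes_eq by blast
    then obtain k where k: "k \<in> {1..d}" "{g\<in>E. flip_coord g = flip_coord e} = Ecl k" by blast
    then have "e \<in> Ecl k" using e by auto
    then show "i \<in> class_coord ` {1..d}" using class_coord(2)[OF k(1)] e k(1) by auto
  qed
qed

lemma halves_eq:
  assumes k: "k \<in> {1..d}"
  defines "A \<equiv> {v\<in>V. class_coord k \<in> f v}" and "B \<equiv> {v\<in>V. class_coord k \<notin> f v}"
  shows "(U k = A \<and> U' k = B) \<or> (U k = B \<and> U' k = A)"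
proof (rule two_block_partition)
  let ?F = "E - Ecl k"
  have invariant: "(class_coord k \<in> f x) = (class_coord k \<in> f y)" if "{x, y} \<in> ?F" for x y
  proof -
    have xy: "{x, y} \<in> E" and "flip_coord {x, y} \<noteq> class_coord k"
      using that class_coord(2)[OF k] by auto
    then show ?thesis using edge_flips_iff(1)[OF xy refl, of "class_coord k"] by auto
  qed
  have within_side: "C \<subseteq> A \<or> C \<subseteq> B" if C: "C \<in> components V ?F" for C
  proof -
    obtain c where "c \<in> C" using components_nonempty[OF C] by blast
    have same: "(class_coord k \<in> f v) = (class_coord k \<in> f c)" if "v \<in> C" for v
      by (rule component_invariant[where P = "\<lambda>x. class_coord k \<in> f x", OF C that \<open>c \<in> C\<close> invariant])
    have "C \<subseteq> V" by (rule components_subset[OF C])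
    then show ?thesis
    proof (cases "class_coord k \<in> f c")
      case True
      then have "C \<subseteq> A" using same \<open>C \<subseteq> V\<close> unfolding A_def by auto
      then show ?thesis ..
    next
      case False
      then have "C \<subseteq> B" using same \<open>C \<subseteq> V\<close> unfolding B_def by auto
      then show ?thesis ..
    qed
  qed
  have U: "U k \<in> components V ?F" and U': "U' k \<in> components V ?F" using halves[OF k] by auto
  show "U k \<subseteq> A \<or> U k \<subseteq> B" by (rule within_side[OF U])
  show "U' k \<subseteq> A \<or> U' k \<subseteq> B" by (rule within_side[OF U'])
  have "U k \<union> U' k = V"
  proof
    show "U k \<union> U' k \<subseteq> V"
      using components_subset[OF U] components_subset[OF U'] by blast
    show "V \<subseteq> U k \<union> U' k"
    proof
      fix v assume "v \<in> V"
      then obtain C where "C \<in> components V ?F" "v \<in> C" using components_cover[of v V ?F] by blast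
      then have "C = U k \<or> C = U' k" using halves[OF k] by simp
      with \<open>v \<in> C\<close> show "v \<in> U k \<union> U' k" by blast
    qed
  qed
  also have "V = A \<union> B" unfolding A_def B_def by auto
  finally show "U k \<union> U' k = A \<union> B" .
  from class_coord(1)[OF k] obtain e where e: "class_coord k = flip_coord e" "e \<in> E"
    by (rule imageE)
  obtain x y where xy: "e = {x, y}" "x \<in> V" "y \<in> V" using edge_doubleton[OF e(2)] by blast
  have "(class_coord k \<in> f x) \<noteq> (class_coord k \<in> f y)"
    using edge_flips_iff(1)[OF e(2) xy(1)] e(1) by simp
  with xy show "A \<noteq> {}" "B \<noteq> {}" unfolding A_def B_def by auto
  show "A \<inter> B = {}" unfolding A_def B_def by blast
qed

definition separated_by :: "nat \<Rightarrow> 'a set \<Rightarrow> 'a set \<Rightarrow> bool" where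
  "separated_by k e g \<longleftrightarrow>
     e \<in> edges_in E (U k) \<and> g \<in> edges_in E (U' k) \<or> e \<in> edges_in E (U' k) \<and> g \<in> edges_in E (U k)"

lemma separates_class_coord_iff:
  assumes k: "k \<in> {1..d}" and "e \<in> E" "g \<in> E"
  shows "separates (class_coord k) e g \<longleftrightarrow> separated_by k e g"
proof -
  define A where "A = {v\<in>V. class_coord k \<in> f v}"
  define B where "B = {v\<in>V. class_coord k \<notin> f v}"
  have "e \<subseteq> V" "g \<subseteq> V" using assms edge_subset by auto
  then have "separates (class_coord k) e g \<longleftrightarrow> e \<subseteq> A \<and> g \<subseteq> B \<or> e \<subseteq> B \<and> g \<subseteq> A"
    using separates_iff[OF edge_nonempty edge_nonempty, OF assms(2,3)] unfolding A_def B_def by blast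
  moreover have "separated_by k e g \<longleftrightarrow> e \<subseteq> A \<and> g \<subseteq> B \<or> e \<subseteq> B \<and> g \<subseteq> A"
    using halves_eq[OF k] assms unfolding separated_by_def edges_in_def A_def B_def by auto
  ultimately show ?thesis by simp
qed

lemma not_in_both_halves:
  assumes "k \<in> {1..d}" "e \<in> E"
  shows "\<not> (e \<in> edges_in E (U k) \<and> e \<in> edges_in E (U' k))"
  using halves_eq[OF assms(1)] edge_nonempty[OF assms(2)] unfolding edges_in_def by blast

lemma dhat_eq_count_separating_classes:
  assumes "e \<in> E" "g \<in> E"
  shows "dhat V E e g = (\<Sum>k=1..d. of_bool (separated_by k e g))"
proof -
  have "\<not> separates i e g" if "i \<notin> flip_coord ` E" for i
  proof -
    obtain a b where "a \<in> e" "b \<in> g" using assms edge_nonempty by blast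
    moreover have "(i \<in> f a) = (i \<in> f b)" if "a \<in> e" "b \<in> g" for a b
      using unflipped_coord_constant \<open>i \<notin> flip_coord ` E\<close> that assms edge_subset by blast
    ultimately show ?thesis unfolding separates_def by blast
  qed
  then have "(\<Sum>i<n. of_bool (separates i e g)) = (\<Sum>i\<in>flip_coord ` E. of_bool (separates i e g))"
    using flip_coord_less by (intro sum.mono_neutral_right) auto
  then have "dhat V E e g = (\<Sum>i\<in>flip_coord ` E. of_bool (separates i e g))"
    using dhat_eq_count_separating[OF assms] by (simp only:)
  also have "\<dots> = (\<Sum>k=1..d. of_bool (separates (class_coord k) e g))"
    unfolding class_coord_image[symmetric] by (simp only: sum.reindex[OF inj_on_class_coord] comp_def)
  also have "\<dots> = (\<Sum>k=1..d. of_bool (separated_by k e g))"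
    using separates_class_coord_iff assms by (intro sum.cong) auto
  finally show ?thesis .
qed

lemma not_separated_by_self: "k \<in> {1..d} \<Longrightarrow> e \<in> E \<Longrightarrow> \<not> separated_by k e e"
  using not_in_both_halves unfolding separated_by_def by blast

lemma separated_by_commute: "separated_by k e g \<longleftrightarrow> separated_by k g e"
  unfolding separated_by_def by auto

lemma of_bool_separated_by:
  assumes "k \<in> {1..d}" "e \<in> E"
  shows "(of_bool (separated_by k e g) :: nat) =
    of_bool (e \<in> edges_in E (U k) \<and> g \<in> edges_in E (U' k)) +
    of_bool (e \<in> edges_in E (U' k) \<and> g \<in> edges_in E (U k))"
  using not_in_both_halves[OF assms] unfolding separated_by_def by auto

lemma count_separated_by_both:
  assumes k: "k \<in> {1..d}" and l: "l \<in> {1..d}"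
  shows "(\<Sum>e\<in>E. \<Sum>g\<in>E. of_bool (separated_by k e g) * of_bool (separated_by l e g) :: nat) =
    2 * (card (edges_in E (U k) \<inter> edges_in E (U l)) * card (edges_in E (U' k) \<inter> edges_in E (U' l))
       + card (edges_in E (U k) \<inter> edges_in E (U' l)) * card (edges_in E (U' k) \<inter> edges_in E (U l)))"
proof -
  define P where "P k e \<longleftrightarrow> e \<in> edges_in E (U k)" for k e
  define Q where "Q k e \<longleftrightarrow> e \<in> edges_in E (U' k)" for k e
  have expand: "(of_bool (separated_by k e g) * of_bool (separated_by l e g) :: nat) =
      of_bool (P k e \<and> P l e) * of_bool (Q k g \<and> Q l g) + of_bool (P k e \<and> Q l e) * of_bool (Q k g \<and> P l g)
    + of_bool (Q k e \<and> P l e) * of_bool (P k g \<and> Q l g) + of_bool (Q k e \<and> Q l e) * of_bool (P k g \<and> P l g)"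
    if "e \<in> E" for e g
    unfolding of_bool_separated_by[OF k that] of_bool_separated_by[OF l that] P_def[symmetric] Q_def[symmetric]
    by (simp add: of_bool_conj algebra_simps)
  have cards: "{e\<in>E. P k e \<and> P l e} = edges_in E (U k) \<inter> edges_in E (U l)"
    "{e\<in>E. Q k e \<and> Q l e} = edges_in E (U' k) \<inter> edges_in E (U' l)"
    "{e\<in>E. P k e \<and> Q l e} = edges_in E (U k) \<inter> edges_in E (U' l)"
    "{e\<in>E. Q k e \<and> P l e} = edges_in E (U' k) \<inter> edges_in E (U l)"
    unfolding P_def Q_def edges_in_def by auto
  have "(\<Sum>e\<in>E. \<Sum>g\<in>E. of_bool (separated_by k e g) * of_bool (separated_by l e g) :: nat) =
      (\<Sum>e\<in>E. \<Sum>g\<in>E. of_bool (P k e \<and> P l e) * of_bool (Q k g \<and> Q l g))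
    + (\<Sum>e\<in>E. \<Sum>g\<in>E. of_bool (P k e \<and> Q l e) * of_bool (Q k g \<and> P l g))
    + (\<Sum>e\<in>E. \<Sum>g\<in>E. of_bool (Q k e \<and> P l e) * of_bool (P k g \<and> Q l g))
    + (\<Sum>e\<in>E. \<Sum>g\<in>E. of_bool (Q k e \<and> Q l e) * of_bool (P k g \<and> P l g))"
    unfolding sum.distrib[symmetric] by (intro sum.cong refl, erule expand)
  also have "\<dots> =
      card (edges_in E (U k) \<inter> edges_in E (U l)) * card (edges_in E (U' k) \<inter> edges_in E (U' l))
    + card (edges_in E (U k) \<inter> edges_in E (U' l)) * card (edges_in E (U' k) \<inter> edges_in E (U l))
    + card (edges_in E (U' k) \<inter> edges_in E (U l)) * card (edges_in E (U k) \<inter> edges_in E (U' l))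
    + card (edges_in E (U' k) \<inter> edges_in E (U' l)) * card (edges_in E (U k) \<inter> edges_in E (U l))"
    by (simp only: sum_sum_of_bool_mult[OF finite_E] cards)
  finally show ?thesis by (simp add: algebra_simps)
qed

lemma sum_dhat_square:
  "(\<Sum>e\<in>E. \<Sum>g\<in>E. dhat V E e g ^ 2) =
     2 * Wehat V E + 4 * (\<Sum>k = 1..d - 1. \<Sum>l = k + 1..d.
        card (edges_in E (U k) \<inter> edges_in E (U l)) * card (edges_in E (U' k) \<inter> edges_in E (U' l))
      + card (edges_in E (U k) \<inter> edges_in E (U' l)) * card (edges_in E (U' k) \<inter> edges_in E (U l)))"
    (is "_ = 2 * Wehat V E + 4 * (\<Sum>k = 1..d - 1. \<Sum>l = k + 1..d. ?m k l)")
proof -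
  define x where "x k e g = (of_bool (separated_by k e g) :: nat)" for k e g
  define T where "T e g = (\<Sum>k=1..d-1. \<Sum>l=k+1..d. x k e g * x l e g)" for e g
  have "dhat V E e g ^ 2 = dhat V E e g + 2 * T e g" if "e \<in> E" "g \<in> E" for e g
    unfolding dhat_eq_count_separating_classes[OF that] square_sum_atLeastAtMost T_def x_def
    by (simp add: power2_eq_square of_bool_conj[symmetric])
  then have "(\<Sum>e\<in>E. \<Sum>g\<in>E. dhat V E e g ^ 2) =
      (\<Sum>e\<in>E. \<Sum>g\<in>E. dhat V E e g) + 2 * (\<Sum>e\<in>E. \<Sum>g\<in>E. T e g)"
    by (simp add: sum.distrib sum_distrib_left)
  also have "(\<Sum>e\<in>E. \<Sum>g\<in>E. dhat V E e g) = 2 * Wehat V E"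
    unfolding Wehat_def
  proof (rule sum_symmetric_eq_twice_sum_doubletons[OF finite_E])
    show "dhat V E e g = dhat V E g e" if "e \<in> E" "g \<in> E" for e g
      using that by (simp add: dhat_eq_count_separating_classes separated_by_commute)
    show "dhat V E e e = 0" if "e \<in> E" for e
      using that by (simp add: dhat_eq_count_separating_classes not_separated_by_self)
  qed
  also have "(\<Sum>e\<in>E. \<Sum>g\<in>E. T e g) = (\<Sum>k=1..d-1. \<Sum>l=k+1..d. \<Sum>e\<in>E. \<Sum>g\<in>E. x k e g * x l e g)"
    unfolding T_def by (rule sum_swap_nested)
  also have "\<dots> = (\<Sum>k=1..d-1. \<Sum>l=k+1..d. 2 * ?m k l)"
    unfolding x_def by (intro sum.cong refl count_separated_by_both) auto
  finally show ?thesis by (simp only: sum_distrib_left) simp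
qed

end

theorem lemma3p3:
  fixes V :: "'a set" and E :: "'a set set" and d :: nat
    and Ecl :: "nat \<Rightarrow> 'a set set" and U U' :: "nat \<Rightarrow> 'a set"
  assumes "partial_cube V E"
    and "connected_graph V E"
    and "bij_betw Ecl {1..d} (theta_classes V E)"
    and "\<And>k. k \<in> {1..d} \<Longrightarrow> components V (E - Ecl k) = {U k, U' k} \<and> U k \<noteq> U' k"
  shows "(\<Sum>e\<in>E. \<Sum>f\<in>E. dhat V E e f ^ 2) =
           2 * Wehat V E + 4 * (\<Sum>k = 1..d - 1. \<Sum>l = k + 1..d.
              card (edges_in E (U k) \<inter> edges_in E (U l)) * card (edges_in E (U' k) \<inter> edges_in E (U' l))
            + card (edges_in E (U k) \<inter> edges_in E (U' l)) * card (edges_in E (U' k) \<inter> edges_in E (U l)))"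
proof -
  obtain n :: nat and f :: "'a \<Rightarrow> nat set" where "graph V E" and "\<forall>v\<in>V. f v \<subseteq> {..<n}"
    and "\<forall>u\<in>V. \<forall>v\<in>V. {u, v} \<in> E \<longrightarrow> card ((f u - f v) \<union> (f v - f u)) = 1"
    and "\<forall>u\<in>V. \<forall>v\<in>V. reach V E u v \<and> dist V E u v = card ((f u - f v) \<union> (f v - f u))"
    using assms(1) unfolding partial_cube_def by blast
  then have "cube_embedding V E n f" unfolding cube_embedding_def by blast
  moreover have "enumerated_theta_classes_axioms V E d Ecl U U'"
    using assms(3,4) unfolding enumerated_theta_classes_axioms_def by blast
  ultimately interpret enumerated_theta_classes V E n f d Ecl U U'
    by (rule enumerated_theta_classes.intro)
  show ?thesis by (rule sum_dhat_square)
qed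

end
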